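(* For every $13$-card Rummy hand $h$ and every choice of wild-card joker $wcj$, we have $\mathrm{MinDist}(h,wcj)\le 8$.
   Context: Rummy is played with a single standard deck (ranks $A,2,3,\dots,10,J,Q,K$ in each of the four suits) together with a printed joker. A hand is a set of $13$ distinct cards from this deck. A wild-card joker $wcj$ is a designated card; every card of the same rank as $wcj$ (and the printed joker) is a joker, which may stand in for any other card. A meld is one of: a pure sequence (at least $3$ cards of the same suit with consecutive ranks in the order $A\,2\,3\,4\,5\,6\,7\,8\,9\,10\,J\,Q\,K\,A$, i.e. the ace may be low or high but sequences do not wrap around through $K\,A\,2$); an impure sequence (as a pure sequence, but one or more cards replaced by jokers); a pure set (at least $3$ cards of the same rank and pairwise different suits); an impure set (as a pure set, but one or more cards replaced by jokers). A hand is declarable if it can be partitioned into melds of which at least one is a pure sequence and at least one other is a (pure or impure) sequence. For hands $h,h'$, $d_{wcj}(h,h')$ is the minimum number of cards of $h$ that must be replaced to obtain $h'$ (i.e. $13-|h\cap h'|$), and $\mathrm{MinDist}(h,wcj)=\min\{d_{wcj}(h,h') : h' \text{ a declarable hand}\}$. *)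

theory Defs
  imports Main "HOL-Library.Disjoint_Sets"
begin

datatype suit = Spades | Hearts | Diamonds | Clubs

text \<open>Ranks are numbered 1..13: 1 = Ace, 2..10, 11 = J, 12 = Q, 13 = K.
  PJoker is the printed joker.\<close>
datatype card = Std suit nat | PJoker

definition deck :: "card set" where
  "deck = {Std s r | s r. 1 \<le> r \<and> r \<le> 13} \<union> {PJoker}"

definition is_hand :: "card set \<Rightarrow> bool" where
  "is_hand h \<longleftrightarrow> h \<subseteq> deck \<and> card h = 13"

fun rank_of :: "card \<Rightarrow> nat" where
  "rank_of (Std s r) = r"
| "rank_of PJoker = 0"

definition is_joker :: "card \<Rightarrow> card \<Rightarrow> bool" where
  "is_joker wcj c \<longleftrightarrow> c = PJoker \<or> (c \<noteq> PJoker \<and> rank_of c = rank_of wcj)"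

text \<open>Positions in the order A 2 3 ... 10 J Q K A are 1..14; position 14 is the high ace.\<close>
definition rank_at :: "nat \<Rightarrow> nat" where
  "rank_at p = (if p = 14 then 1 else p)"

definition pure_sequence :: "card set \<Rightarrow> bool" where
  "pure_sequence S \<longleftrightarrow> (\<exists>s i j. 1 \<le> i \<and> i + 2 \<le> j \<and> j \<le> 14 \<and> \<not> (i = 1 \<and> j = 14) \<and>
      S = (\<lambda>p. Std s (rank_at p)) ` {i..j})"

definition pure_set :: "card set \<Rightarrow> bool" where
  "pure_set S \<longleftrightarrow> (\<exists>r T. 1 \<le> r \<and> r \<le> 13 \<and> card T \<ge> 3 \<and> S = (\<lambda>s. Std s r) ` T)"

definition impure :: "(card set \<Rightarrow> bool) \<Rightarrow> card \<Rightarrow> card set \<Rightarrow> bool" where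
  "impure P wcj S \<longleftrightarrow> (\<exists>T R J. P T \<and> R \<subseteq> T \<and> R \<noteq> {} \<and> J \<subseteq> deck \<and>
      (\<forall>c\<in>J. is_joker wcj c) \<and> card J = card R \<and> J \<inter> (T - R) = {} \<and> S = (T - R) \<union> J)"

definition impure_sequence :: "card \<Rightarrow> card set \<Rightarrow> bool" where
  "impure_sequence wcj S \<longleftrightarrow> impure pure_sequence wcj S"

definition impure_set :: "card \<Rightarrow> card set \<Rightarrow> bool" where
  "impure_set wcj S \<longleftrightarrow> impure pure_set wcj S"

definition is_sequence :: "card \<Rightarrow> card set \<Rightarrow> bool" where
  "is_sequence wcj S \<longleftrightarrow> pure_sequence S \<or> impure_sequence wcj S"

definition is_meld :: "card \<Rightarrow> card set \<Rightarrow> bool" where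
  "is_meld wcj S \<longleftrightarrow> pure_sequence S \<or> impure_sequence wcj S \<or> pure_set S \<or> impure_set wcj S"

definition declarable :: "card \<Rightarrow> card set \<Rightarrow> bool" where
  "declarable wcj h \<longleftrightarrow> is_hand h \<and> (\<exists>M. partition_on h M \<and> (\<forall>m\<in>M. is_meld wcj m) \<and>
      (\<exists>m1\<in>M. \<exists>m2\<in>M. m1 \<noteq> m2 \<and> pure_sequence m1 \<and> is_sequence wcj m2))"

definition dist :: "card set \<Rightarrow> card set \<Rightarrow> nat" where
  "dist h h' = 13 - card (h \<inter> h')"

definition MinDist :: "card set \<Rightarrow> card \<Rightarrow> nat" where
  "MinDist h wcj = Min {dist h h' | h'. declarable wcj h'}"

end

theory Submission
  imports Defs
begin

(* Let c s be the number of cards of suit s in h; the c s add up to 13, or to 12 when h holds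
   the printed joker. A declarable hand sharing 5 cards with h is built by cases:
   - some c s >= 5: take the whole suit s, melded as the runs A..3 and 4..K;
   - some suit is void: the other three suits have 4 cards each. Of any 4 ranks, two lie in
     a window of 4 consecutive positions of A 2 ... K A (pigeonhole on three blocks of four,
     or the window J Q K A), so 4-runs in two of these suits meet h twice each, and a 5-run
     through a card of the third suit completes 4 + 4 + 5 = 13 cards;
   - every suit occurs in h: a 4-card sequence of one suit meeting h twice, and 3-runs through
     a card of each other suit (4 + 3 + 3 + 3 = 13). The 4-card sequence is a pure 4-run if
     some c s = 4; otherwise all c s = 3, so h holds the printed joker, which then replaces
     a card of a 4-run through a card of h.
   The printed joker is a joker whatever wcj is. *)

lemma UNIV_suit: "(UNIV :: suit set) = {Spades, Hearts, Diamonds, Clubs}"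
  using suit.exhaust by auto

lemma finite_UNIV_suit [simp]: "finite (UNIV :: suit set)"
  by (simp add: UNIV_suit)

lemma obtain_other_suits:
  obtains s2 s3 s4 :: suit where "distinct [s1, s2, s3, s4]" "UNIV = {s1, s2, s3, s4}"
proof (cases s1)
  case Spades
  then show ?thesis using that[of Hearts Diamonds Clubs] by (auto simp: UNIV_suit)
next
  case Hearts
  then show ?thesis using that[of Spades Diamonds Clubs] by (auto simp: UNIV_suit)
next
  case Diamonds
  then show ?thesis using that[of Spades Hearts Clubs] by (auto simp: UNIV_suit)
next
  case Clubs
  then show ?thesis using that[of Spades Hearts Diamonds] by (auto simp: UNIV_suit)
qed

lemma two_le_card: "finite A \<Longrightarrow> x \<in> A \<Longrightarrow> y \<in> A \<Longrightarrow> x \<noteq> y \<Longrightarrow> 2 \<le> card A"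
  using card_le_Suc0_iff_eq[of A] by fastforce

lemma card_neq_0_obtain:
  assumes "card A \<noteq> 0"
  obtains x where "x \<in> A"
  using assms by (metis card.empty ex_in_conv)

definition suit_cards :: "suit \<Rightarrow> card set" where
  "suit_cards s = Std s ` {1..13}"

lemma PJoker_notin_suit_cards [simp]: "PJoker \<notin> suit_cards s"
  by (auto simp: suit_cards_def)

lemma suit_cards_disjoint: "s \<noteq> t \<Longrightarrow> suit_cards s \<inter> suit_cards t = {}"
  by (auto simp: suit_cards_def)

lemma suit_parts_disjoint:
  "A \<subseteq> insert PJoker (suit_cards s) \<Longrightarrow> B \<subseteq> suit_cards t \<Longrightarrow> s \<noteq> t \<Longrightarrow> A \<inter> B = {}"
  using suit_cards_disjoint[of s t] PJoker_notin_suit_cards[of t] by blast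

lemma deck_eq_suit_cards: "deck = insert PJoker (\<Union>s. suit_cards s)"
  unfolding deck_def suit_cards_def by fastforce

lemma finite_deck: "finite deck"
  by (simp add: deck_eq_suit_cards suit_cards_def)

lemma suit_cards_subset_deck: "suit_cards s \<subseteq> deck"
  by (auto simp: deck_eq_suit_cards)

lemma card_by_suits:
  assumes "h \<subseteq> deck"
  shows "card h = (\<Sum>s\<in>UNIV. card (h \<inter> suit_cards s)) + (if PJoker \<in> h then 1 else 0)"
proof -
  have fin: "finite h" using assms finite_deck finite_subset by blast
  have split: "h = (\<Union>s. h \<inter> suit_cards s) \<union> (h \<inter> {PJoker})"
    using assms by (auto simp: deck_eq_suit_cards)
  have "card (\<Union>s. h \<inter> suit_cards s) = (\<Sum>s\<in>UNIV. card (h \<inter> suit_cards s))"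
    using fin suit_cards_disjoint by (intro card_UN_disjoint) auto
  moreover have "card (h \<inter> {PJoker}) = (if PJoker \<in> h then 1 else 0)"
    by auto
  ultimately show ?thesis
    using fin by (subst split, subst card_Un_disjoint) auto
qed

definition run :: "suit \<Rightarrow> nat \<Rightarrow> nat \<Rightarrow> card set" where
  "run s i j = (\<lambda>p. Std s (rank_at p)) ` {i..j}"

lemma rank_at_eq [simp]: "p \<le> 13 \<Longrightarrow> rank_at p = p"
  by (simp add: rank_at_def)

lemma pure_sequence_run:
  "1 \<le> i \<Longrightarrow> i + 2 \<le> j \<Longrightarrow> j \<le> 14 \<Longrightarrow> \<not> (i = 1 \<and> j = 14) \<Longrightarrow> pure_sequence (run s i j)"
  unfolding pure_sequence_def run_def by blast

lemma card_run:
  assumes "1 \<le> i" "j \<le> 14" "\<not> (i = 1 \<and> j = 14)"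
  shows "card (run s i j) = Suc j - i"
proof -
  have "inj_on (\<lambda>p. Std s (rank_at p)) {i..j}"
    using assms by (auto simp: inj_on_def rank_at_def split: if_splits)
  then show ?thesis by (simp add: run_def card_image)
qed

lemma run_subset_suit_cards: "1 \<le> i \<Longrightarrow> j \<le> 14 \<Longrightarrow> run s i j \<subseteq> suit_cards s"
  by (auto simp: run_def suit_cards_def rank_at_def)

lemma run_eq_image: "j \<le> 13 \<Longrightarrow> run s i j = Std s ` {i..j}"
  by (auto simp: run_def rank_at_def)

lemma pure_sequence_suit_interval:
  "1 \<le> i \<Longrightarrow> i + 2 \<le> j \<Longrightarrow> j \<le> 13 \<Longrightarrow> pure_sequence (Std s ` {i..j})"
  using pure_sequence_run[of i j s] by (simp add: run_eq_image)

lemma run_through: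
  assumes "c \<in> suit_cards s" "3 \<le> n" "n \<le> 13"
  obtains R where "pure_sequence R" "card R = n" "R \<subseteq> suit_cards s" "c \<in> R"
proof -
  obtain r where r: "c = Std s r" "1 \<le> r" "r \<le> 13" using assms(1) by (auto simp: suit_cards_def)
  define i where "i = min r (14 - n)"
  have i: "1 \<le> i" "i \<le> r" "r \<le> i + n - 1" "i + n - 1 \<le> 13"
    using assms(2,3) r(2,3) by (auto simp: i_def)
  show ?thesis
  proof (rule that)
    show "pure_sequence (run s i (i + n - 1))"
      using i assms(2) by (intro pure_sequence_run) auto
    show "card (run s i (i + n - 1)) = n"
      using i assms(2) by (subst card_run) auto
    show "run s i (i + n - 1) \<subseteq> suit_cards s"
      using i by (intro run_subset_suit_cards) auto
    show "c \<in> run s i (i + n - 1)"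
      using i r(1) by (simp add: run_eq_image)
  qed
qed

lemma PJoker_notin_pure_sequence: "pure_sequence T \<Longrightarrow> PJoker \<notin> T"
  by (auto simp: pure_sequence_def)

lemma finite_pure_sequence: "pure_sequence T \<Longrightarrow> finite T"
  by (auto simp: pure_sequence_def)

lemma impure_sequence_replace_by_joker:
  assumes "pure_sequence T" "d \<in> T"
  shows "impure_sequence wcj (insert PJoker (T - {d}))"
  unfolding impure_sequence_def impure_def
  using assms PJoker_notin_pure_sequence[OF assms(1)]
  by (intro exI[of _ T] exI[of _ "{d}"] exI[of _ "{PJoker}"])
    (simp_all add: deck_def is_joker_def insert_absorb)

lemma impure_run_through:
  assumes "c \<in> suit_cards s"
  obtains R where "impure_sequence wcj R" "card R = 4" "R \<subseteq> insert PJoker (suit_cards s)"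
    "c \<in> R" "PJoker \<in> R"
proof -
  obtain T where T: "pure_sequence T" "card T = 4" "T \<subseteq> suit_cards s" "c \<in> T"
    using run_through[OF assms, of 4] by auto
  have "card (T - {c}) = 3" using T finite_pure_sequence[OF T(1)] by simp
  then obtain d where d: "d \<in> T" "d \<noteq> c"
    by (metis DiffE card.empty ex_in_conv singletonI zero_neq_numeral)
  have "card (insert PJoker (T - {d})) = 4"
    using T d PJoker_notin_pure_sequence[OF T(1)] finite_pure_sequence[OF T(1)] by simp
  moreover have "impure_sequence wcj (insert PJoker (T - {d}))"
    using T(1) d(1) by (rule impure_sequence_replace_by_joker)
  ultimately show ?thesis using that T d by auto
qed

lemma two_ranks_in_window:
  assumes K: "K \<subseteq> {1..13}" and card_K: "4 \<le> card K"
  obtains i where "1 \<le> i" "i \<le> 11" "2 \<le> card (K \<inter> rank_at ` {i..i + 3})"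
proof (cases "1 \<in> K \<and> 13 \<in> K")
  case True
  have "1 \<in> rank_at ` {11..14}" "13 \<in> rank_at ` {11..14}"
    by (force simp: rank_at_def)+
  then have "2 \<le> card (K \<inter> rank_at ` {11..11 + 3})"
    using True by (intro two_le_card[of _ 1 13]) auto
  then show ?thesis by (intro that[of 11]) simp_all
next
  case False
  define lo :: nat where "lo = (if 1 \<in> K then 1 else 2)"
  have range: "lo \<le> r \<and> r \<le> lo + 11" if "r \<in> K" for r
  proof -
    have "1 \<le> r" "r \<le> 13" using K that by auto
    moreover have "r = 13 \<longrightarrow> 1 \<notin> K" "r = 1 \<longrightarrow> 1 \<in> K" using False that by auto
    ultimately show ?thesis by (auto simp: lo_def)
  qed
  define block where "block r = (r - lo) div 4" for r
  have "block ` K \<subseteq> {0, 1, 2}"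
    using range by (fastforce simp: block_def)
  then have "\<not> inj_on block K"
    using card_K card_inj_on_le[of block K "{0, 1, 2}"] by auto
  then obtain x y where xy: "x \<in> K" "y \<in> K" "x \<noteq> y" "block x = block y"
    by (auto simp: inj_on_def)
  have block_bounds: "4 * block r \<le> r - lo \<and> r - lo < 4 * block r + 4" for r
    using div_mult_mod_eq[of "r - lo" 4] mod_less_divisor[of 4 "r - lo"]
    unfolding block_def by linarith
  have "4 * block x \<le> 11"
    using block_bounds[of x] range[OF xy(1)] by linarith
  then have "block x \<le> 2" by presburger
  define i where "i = lo + 4 * block x"
  have window: "x \<in> {i..i + 3}" "y \<in> {i..i + 3}"
    using xy(4) range[OF xy(1)] range[OF xy(2)] block_bounds[of x] block_bounds[of y]
    unfolding i_def by auto
  have i: "1 \<le> i" "i + 3 \<le> 13"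
    using \<open>block x \<le> 2\<close> by (auto simp: i_def lo_def)
  have "z \<in> rank_at ` {i..i + 3}" if "z \<in> {i..i + 3}" for z
    using that i by (intro image_eqI[of z _ z]) auto
  with window have "x \<in> rank_at ` {i..i + 3}" "y \<in> rank_at ` {i..i + 3}"
    by auto
  then have "2 \<le> card (K \<inter> rank_at ` {i..i + 3})"
    using xy by (intro two_le_card[of _ x y]) auto
  then show ?thesis using i by (intro that) auto
qed

lemma run4_with_two_common_cards:
  assumes hand: "h \<subseteq> deck" and many: "4 \<le> card (h \<inter> suit_cards s)"
  obtains R where "pure_sequence R" "card R = 4" "R \<subseteq> suit_cards s" "2 \<le> card (h \<inter> R)"
proof -
  define K where "K = {r. Std s r \<in> h}"
  have "h \<inter> suit_cards s = Std s ` K"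
    using hand by (auto simp: K_def suit_cards_def deck_def)
  then have "card K = card (h \<inter> suit_cards s)"
    by (simp add: card_image inj_on_def)
  moreover have "K \<subseteq> {1..13}"
    using hand by (auto simp: K_def deck_def)
  ultimately obtain i where i: "1 \<le> i" "i \<le> 11" "2 \<le> card (K \<inter> rank_at ` {i..i + 3})"
    using many two_ranks_in_window by metis
  have "Std s ` (K \<inter> rank_at ` {i..i + 3}) \<subseteq> h \<inter> run s i (i + 3)"
    by (auto simp: K_def run_def)
  moreover have "card (Std s ` (K \<inter> rank_at ` {i..i + 3})) = card (K \<inter> rank_at ` {i..i + 3})"
    by (simp add: card_image inj_on_def)
  moreover have "finite (h \<inter> run s i (i + 3))"
    by (simp add: run_def)
  ultimately have "2 \<le> card (h \<inter> run s i (i + 3))"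
    using i(3) card_mono by (metis le_trans)
  moreover have "pure_sequence (run s i (i + 3))" "card (run s i (i + 3)) = 4"
    "run s i (i + 3) \<subseteq> suit_cards s"
    using i by (simp_all add: pure_sequence_run run_subset_suit_cards card_run)
  ultimately show ?thesis using that by blast
qed

lemma declarable_Union:
  assumes melds: "\<And>m. m \<in> M \<Longrightarrow> is_meld wcj m \<and> m \<subseteq> deck \<and> m \<noteq> {}"
    and disj: "disjoint M" and size: "(\<Sum>m\<in>M. card m) = 13"
    and seqs: "A \<in> M" "B \<in> M" "A \<noteq> B" "pure_sequence A" "is_sequence wcj B"
  shows "declarable wcj (\<Union>M)"
proof -
  have sub: "\<Union>M \<subseteq> deck" using melds by blast
  then have "finite m" if "m \<in> M" for m
    using that finite_deck by (meson Union_upper finite_subset order_trans)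
  then have "card (\<Union>M) = 13"
    using card_Union_disjoint[OF disj] size by simp
  moreover have "partition_on (\<Union>M) M"
    using disj melds by (auto simp: partition_on_def)
  ultimately show ?thesis
    using sub melds seqs unfolding declarable_def is_hand_def by blast
qed

lemma card_Int_Union_disjoint:
  assumes "disjoint M" "finite M" "\<And>m. m \<in> M \<Longrightarrow> finite m"
  shows "card (h \<inter> \<Union>M) = (\<Sum>m\<in>M. card (h \<inter> m))"
proof -
  have "h \<inter> \<Union>M = (\<Union>m\<in>M. h \<inter> m)" by blast
  also have "card \<dots> = (\<Sum>m\<in>M. card (h \<inter> m))"
    using assms by (intro card_UN_disjoint) (auto simp: disjoint_def)
  finally show ?thesis .
qed

lemma MinDist_le_dist: "declarable wcj h' \<Longrightarrow> MinDist h wcj \<le> dist h h'"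
  unfolding MinDist_def
  by (rule Min_le) (auto intro: finite_subset[of _ "{..13}"] simp: dist_def)

lemma declarable_long_suit:
  assumes long: "5 \<le> card (h \<inter> suit_cards s)"
  shows "\<exists>h'. declarable wcj h' \<and> 5 \<le> card (h \<inter> h')"
proof -
  define A B where "A = Std s ` {1..3}" and "B = Std s ` {4..13}"
  have pure: "pure_sequence A" "pure_sequence B"
    unfolding A_def B_def by (rule pure_sequence_suit_interval; simp)+
  have "{1..3} \<union> {4..13} = {1..13::nat}" by auto
  then have suit: "A \<union> B = suit_cards s"
    by (metis A_def B_def image_Un suit_cards_def)
  have sizes: "card A = 3" "card B = 10" and "Std s 1 \<in> A - B"
    by (auto simp: A_def B_def card_image inj_on_def)
  then have "A \<noteq> B" by blast
  have "declarable wcj (\<Union>{A, B})"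
  proof (rule declarable_Union)
    show "is_meld wcj m \<and> m \<subseteq> deck \<and> m \<noteq> {}" if "m \<in> {A, B}" for m
      using that pure suit suit_cards_subset_deck[of s]
      by (auto simp: is_meld_def A_def B_def)
    show "disjoint {A, B}"
      by (auto simp: A_def B_def disjoint_def)
    show "(\<Sum>m\<in>{A, B}. card m) = 13"
      using sizes \<open>A \<noteq> B\<close> by simp
  qed (use pure \<open>A \<noteq> B\<close> in \<open>auto simp: is_sequence_def\<close>)
  then show ?thesis using long suit by auto
qed

lemma declarable_three_suits:
  assumes hand: "h \<subseteq> deck" and suits: "distinct [s1, s2, s3]"
    and many: "4 \<le> card (h \<inter> suit_cards s1)" "4 \<le> card (h \<inter> suit_cards s2)"
    and met: "c3 \<in> h \<inter> suit_cards s3"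
  shows "\<exists>h'. declarable wcj h' \<and> 5 \<le> card (h \<inter> h')"
proof -
  obtain R1 where R1: "pure_sequence R1" "card R1 = 4" "R1 \<subseteq> suit_cards s1" "2 \<le> card (h \<inter> R1)"
    using run4_with_two_common_cards[OF hand many(1)] .
  obtain R2 where R2: "pure_sequence R2" "card R2 = 4" "R2 \<subseteq> suit_cards s2" "2 \<le> card (h \<inter> R2)"
    using run4_with_two_common_cards[OF hand many(2)] .
  obtain R3 where R3: "pure_sequence R3" "card R3 = 5" "R3 \<subseteq> suit_cards s3" "c3 \<in> R3"
    using met run_through[of c3 s3 5] by auto
  let ?M = "{R1, R2, R3}"
  have fin: "finite m" if "m \<in> ?M" for m
    using that R1(1) R2(1) R3(1) finite_pure_sequence by auto
  have "R1 \<inter> R2 = {}" "R1 \<inter> R3 = {}" "R2 \<inter> R3 = {}"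
    using suit_parts_disjoint[OF subset_insertI2[OF R1(3)] R2(3)]
      suit_parts_disjoint[OF subset_insertI2[OF R1(3)] R3(3)]
      suit_parts_disjoint[OF subset_insertI2[OF R2(3)] R3(3)] suits
    by auto
  then have disj: "disjoint ?M" and dist: "distinct [R1, R2, R3]"
    using R1(2) R2(2) R3(2) by (auto simp: disjoint_def)
  have "R1 \<subseteq> deck" "R2 \<subseteq> deck" "R3 \<subseteq> deck"
    using R1(3) R2(3) R3(3) suit_cards_subset_deck by blast+
  then have "declarable wcj (\<Union>?M)"
    using R1(1,2) R2(1,2) R3(1,2) dist disj
    by (intro declarable_Union[of _ _ R1 R2]) (auto simp: is_meld_def is_sequence_def)
  moreover have "card (h \<inter> \<Union>?M) = card (h \<inter> R1) + card (h \<inter> R2) + card (h \<inter> R3)"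
    using card_Int_Union_disjoint[OF disj _ fin] dist by simp
  moreover have "0 < card (h \<inter> R3)"
    using met R3(4) fin by (auto simp: card_gt_0_iff)
  ultimately show ?thesis using R1(4) R2(4) by fastforce
qed

lemma declarable_four_suits:
  assumes hand: "h \<subseteq> deck" and suits: "distinct [s1, s2, s3, s4]"
    and R1: "is_sequence wcj R1" "card R1 = 4" "R1 \<subseteq> insert PJoker (suit_cards s1)"
      "2 \<le> card (h \<inter> R1)"
    and met: "c2 \<in> h \<inter> suit_cards s2" "c3 \<in> h \<inter> suit_cards s3" "c4 \<in> h \<inter> suit_cards s4"
  shows "\<exists>h'. declarable wcj h' \<and> 5 \<le> card (h \<inter> h')"
proof -
  obtain R2 where R2: "pure_sequence R2" "card R2 = 3" "R2 \<subseteq> suit_cards s2" "c2 \<in> R2"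
    using met(1) run_through[of c2 s2 3] by auto
  obtain R3 where R3: "pure_sequence R3" "card R3 = 3" "R3 \<subseteq> suit_cards s3" "c3 \<in> R3"
    using met(2) run_through[of c3 s3 3] by auto
  obtain R4 where R4: "pure_sequence R4" "card R4 = 3" "R4 \<subseteq> suit_cards s4" "c4 \<in> R4"
    using met(3) run_through[of c4 s4 3] by auto
  let ?M = "{R1, R2, R3, R4}"
  have fin: "finite m" if "m \<in> ?M" for m
    using that R1(2) R2(1) R3(1) R4(1) finite_pure_sequence card_ge_0_finite by auto
  have "R1 \<inter> R2 = {}" "R1 \<inter> R3 = {}" "R1 \<inter> R4 = {}"
    "R2 \<inter> R3 = {}" "R2 \<inter> R4 = {}" "R3 \<inter> R4 = {}"
    using suit_parts_disjoint[OF R1(3) R2(3)] suit_parts_disjoint[OF R1(3) R3(3)]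
      suit_parts_disjoint[OF R1(3) R4(3)] suit_parts_disjoint[OF subset_insertI2[OF R2(3)] R3(3)]
      suit_parts_disjoint[OF subset_insertI2[OF R2(3)] R4(3)]
      suit_parts_disjoint[OF subset_insertI2[OF R3(3)] R4(3)] suits
    by auto
  then have disj: "disjoint ?M" and dist: "distinct [R1, R2, R3, R4]"
    using R1(2) R2(2) R3(2) R4(2) by (auto simp: disjoint_def)
  have "R1 \<subseteq> deck" "R2 \<subseteq> deck" "R3 \<subseteq> deck" "R4 \<subseteq> deck"
    using R1(3) R2(3) R3(3) R4(3) suit_cards_subset_deck deck_eq_suit_cards by blast+
  then have "declarable wcj (\<Union>?M)"
    using R1(1,2) R2(1,2) R3(1,2) R4(1,2) dist disj
    by (intro declarable_Union[of _ _ R2 R1]) (auto simp: is_meld_def is_sequence_def)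
  moreover have "card (h \<inter> \<Union>?M) =
      card (h \<inter> R1) + card (h \<inter> R2) + card (h \<inter> R3) + card (h \<inter> R4)"
    using card_Int_Union_disjoint[OF disj _ fin] dist by simp
  moreover have "0 < card (h \<inter> R2)" "0 < card (h \<inter> R3)" "0 < card (h \<inter> R4)"
    using met R2(4) R3(4) R4(4) fin by (auto simp: card_gt_0_iff)
  ultimately show ?thesis using R1(4) by fastforce
qed

lemma declarable_void_suit:
  assumes hand: "is_hand h" and void: "card (h \<inter> suit_cards s) = 0"
    and le4: "\<forall>t. card (h \<inter> suit_cards t) \<le> 4"
  shows "\<exists>h'. declarable wcj h' \<and> 5 \<le> card (h \<inter> h')"
proof -
  let ?c = "\<lambda>s. card (h \<inter> suit_cards s)"
  obtain s1 s2 s3 where suits: "distinct [s, s1, s2, s3]" "UNIV = {s, s1, s2, s3}"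
    by (rule obtain_other_suits)
  have "(\<Sum>t\<in>UNIV. ?c t) = ?c s + ?c s1 + ?c s2 + ?c s3"
    unfolding suits(2) using suits(1) by (simp add: add.assoc)
  then have "12 \<le> ?c s1 + ?c s2 + ?c s3"
    using hand card_by_suits[of h] void by (simp add: is_hand_def split: if_splits)
  moreover have "?c s1 \<le> 4" "?c s2 \<le> 4" "?c s3 \<le> 4"
    using le4 by blast+
  ultimately have many: "4 \<le> ?c s1" "4 \<le> ?c s2" and met: "?c s3 \<noteq> 0"
    by linarith+
  obtain c3 where "c3 \<in> h \<inter> suit_cards s3"
    using met by (rule card_neq_0_obtain)
  moreover have "distinct [s1, s2, s3]" "h \<subseteq> deck"
    using suits(1) hand by (simp_all add: is_hand_def)
  ultimately show ?thesis
    using declarable_three_suits[of h s1 s2 s3, OF _ _ many] by blast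
qed

lemma declarable_four_card_suit:
  assumes hand: "h \<subseteq> deck" and four: "card (h \<inter> suit_cards s) = 4"
    and met: "\<forall>t. card (h \<inter> suit_cards t) \<noteq> 0"
  shows "\<exists>h'. declarable wcj h' \<and> 5 \<le> card (h \<inter> h')"
proof -
  obtain s2 s3 s4 where suits: "distinct [s, s2, s3, s4]"
    by (rule obtain_other_suits)
  obtain R1 where R1: "pure_sequence R1" "card R1 = 4" "R1 \<subseteq> suit_cards s"
    "2 \<le> card (h \<inter> R1)"
    using run4_with_two_common_cards[OF hand] four by (metis order_refl)
  obtain c2 c3 c4 where met': "c2 \<in> h \<inter> suit_cards s2" "c3 \<in> h \<inter> suit_cards s3"
    "c4 \<in> h \<inter> suit_cards s4"
    using met card_neq_0_obtain by metis
  have "is_sequence wcj R1" using R1(1) by (simp add: is_sequence_def)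
  from declarable_four_suits[OF hand suits this R1(2) subset_insertI2[OF R1(3)] R1(4) met']
  show ?thesis .
qed

lemma declarable_short_suits:
  assumes hand: "is_hand h"
    and short: "\<forall>t. card (h \<inter> suit_cards t) \<noteq> 0 \<and> card (h \<inter> suit_cards t) \<le> 3"
  shows "\<exists>h'. declarable wcj h' \<and> 5 \<le> card (h \<inter> h')"
proof -
  let ?c = "\<lambda>s. card (h \<inter> suit_cards s)"
  have deck: "h \<subseteq> deck" using hand by (simp add: is_hand_def)
  have "(\<Sum>s\<in>UNIV. ?c s) \<le> 12"
    using sum_bounded_above[of UNIV ?c 3] short by (simp add: UNIV_suit)
  then have "PJoker \<in> h"
    using hand card_by_suits[OF deck] by (simp add: is_hand_def split: if_splits)
  obtain s2 s3 s4 where suits: "distinct [Spades, s2, s3, s4]"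
    by (rule obtain_other_suits)
  obtain c1 c2 c3 c4 where c1: "c1 \<in> h \<inter> suit_cards Spades"
    and met: "c2 \<in> h \<inter> suit_cards s2" "c3 \<in> h \<inter> suit_cards s3" "c4 \<in> h \<inter> suit_cards s4"
    using short card_neq_0_obtain by metis
  obtain R1 where R1: "impure_sequence wcj R1" "card R1 = 4"
    "R1 \<subseteq> insert PJoker (suit_cards Spades)" "c1 \<in> R1" "PJoker \<in> R1"
    using c1 impure_run_through by blast
  have "2 \<le> card (h \<inter> R1)"
    using c1 R1 \<open>PJoker \<in> h\<close> finite_deck deck
    by (intro two_le_card[of _ c1 PJoker]) (auto intro: finite_subset)
  moreover have "is_sequence wcj R1" using R1(1) by (simp add: is_sequence_def)
  ultimately show ?thesis
    using declarable_four_suits[OF deck suits _ R1(2,3) _ met] by blast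
qed

lemma declarable_with_five_common_cards:
  assumes hand: "is_hand h"
  shows "\<exists>h'. declarable wcj h' \<and> 5 \<le> card (h \<inter> h')"
proof -
  let ?c = "\<lambda>s. card (h \<inter> suit_cards s)"
  consider (long) s where "5 \<le> ?c s"
    | (void) s where "?c s = 0" "\<forall>t. ?c t \<le> 4"
    | (four) s where "?c s = 4" "\<forall>t. ?c t \<noteq> 0"
    | (short) "\<forall>t. ?c t \<noteq> 0 \<and> ?c t \<le> 3"
  proof -
    have "?c t \<le> 4 \<or> 5 \<le> ?c t" "?c t \<le> 3 \<or> ?c t = 4 \<or> 5 \<le> ?c t" for t
      by linarith+
    then show ?thesis using that by metis
  qed
  then show ?thesis
  proof cases
    case long
    then show ?thesis by (rule declarable_long_suit)
  next
    case void
    with hand show ?thesis by (rule declarable_void_suit)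
  next
    case four
    with hand show ?thesis by (intro declarable_four_card_suit) (auto simp: is_hand_def)
  next
    case short
    with hand show ?thesis by (rule declarable_short_suits)
  qed
qed

theorem proposition2:
  assumes "is_hand h"
    and "wcj \<in> deck" and "wcj \<noteq> PJoker"
  shows "MinDist h wcj \<le> 8"
proof -
  obtain h' where "declarable wcj h'" "5 \<le> card (h \<inter> h')"
    using declarable_with_five_common_cards[OF assms(1)] by blast
  then show ?thesis
    using MinDist_le_dist[of wcj h' h] by (simp add: dist_def)
qed

end
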